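(* Let $\mathbb{X}$ be a normed linear space with Borel $\sigma$-algebra $\mathcal{B}_{\mathbb{X}}$, and let $(\mathbb{P},d_{\mathbb{P}})$ be a metric space of probability measures on $(\mathbb{X},\mathcal{B}_{\mathbb{X}})$ such that $d_{\mathbb{P}}$ metrizes weak convergence. Let $g,g^\nu:\mathbb{X}\to\overline{\mathbb{R}}$, $P,P^\nu\in\mathbb{P}$ and $\theta^\nu\in[0,+\infty)$, $\nu\in\mathbb{N}$, and define on $\mathbb{X}\times\mathbb{P}$ (with the product topology) $$\phi^\nu(x,Q):=\mathbb{E}^Q\big[g^\nu(x+\xi)\big]+\theta^\nu d_{\mathbb{P}}(Q,P^\nu),\qquad \phi(x,Q):=\mathbb{E}^Q\big[g(x+\xi)\big]+\iota_{\{P\}}(Q).$$ Suppose $\theta^\nu\to+\infty$, $\theta^\nu d_{\mathbb{P}}(P^\nu,P)\to0$, and for each $x\in\mathbb{X}$: (i) $g$ and all $g^\nu$ are measurable; (ii) for every sequence $Q^\nu\in\mathbb{P}$ converging to some $Q\in\mathbb{P}$, $$\liminf_{K\to+\infty}\ \liminf_{(\nu,y)\to(+\infty,x)}\mathbb{E}^{Q^\nu}\big[g^\nu(y+\xi)\,\mathbb{1}\{\xi:g^\nu(y+\xi)\le -K\}\big]=0;$$ (iii) $\liminf_{(\nu,y)\to(+\infty,x)}g^\nu(y)\ge g(x)$; (iv) for every $Q\in\mathbb{P}$, $\mathbb{E}^Q[g(x+\xi)]>-\infty$; (v) there exists a $P$-integrable function $h:\mathbb{X}\to[0,+\infty)$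 such that for $P$-a.e. $\xi\in\mathbb{X}$ one has $g^\nu(x+\xi)\le h(\xi)$ for all $\nu\in\mathbb{N}$, and $g^\nu(x)\to g(x)$ as $\nu\to+\infty$. Then $\phi^\nu$ epi-converges to $\phi$ as functions on $\mathbb{X}\times\mathbb{P}$.
   Context: $\overline{\mathbb{R}}=\mathbb{R}\cup\{-\infty,+\infty\}$. $\iota_C(z)=0$ if $z\in C$ and $+\infty$ otherwise. Expectations are taken over $\xi\in\mathbb{X}$ distributed according to the indicated probability; for measurable $\overline{\mathbb{R}}$-valued $G$, $\mathbb{E}^\mu[G]:=\int G_+\,d\mu-\int G_-\,d\mu$ with conventions $+\infty-\alpha=+\infty$ for all $\alpha\in\overline{\mathbb{R}}$ and $\beta-(+\infty)=-\infty$ for $\beta\in\mathbb{R}$. $\mathbb{1}\{B\}$ is the indicator. $\liminf_{(\nu,y)\to(+\infty,x)}a^\nu(y):=\lim_{\delta\downarrow0}\lim_{N\to\infty}\inf\{a^\nu(y):\nu\ge N,\ \|y-x\|<\delta\}$. Epi-convergence of $\phi^\nu$ to $\phi$: for every point $z$, $\phi(z)\le\liminf\phi^\nu(z^\nu)$ for all $z^\nu\to z$, and some $z^\nu\to z$ has $\phi^\nu(z^\nu)\to\phi(z)$. *)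

theory Defs
  imports "HOL-Probability.Probability"
begin

text \<open>Expectation of an extended-real valued function with the paper's conventions:
  E[G] = int G_+ - int G_-, where +inf - alpha = +inf and beta - (+inf) = -inf.\<close>
definition expect :: "'a measure \<Rightarrow> ('a \<Rightarrow> ereal) \<Rightarrow> ereal" where
  "expect Q G =
     (let a = (\<integral>\<^sup>+ \<xi>. e2ennreal (G \<xi>) \<partial>Q);
          b = (\<integral>\<^sup>+ \<xi>. e2ennreal (- G \<xi>) \<partial>Q)
      in if a = \<infinity> then \<infinity> else enn2ereal a - enn2ereal b)"

text \<open>Joint lower limit lim_{delta->0} lim_{N->oo} inf{a^nu(y): nu>=N, norm(y-x)<delta};
  both limits are of monotone nondecreasing families, hence suprema.\<close>
definition liminf_joint :: "(nat \<Rightarrow> 'a::real_normed_vector \<Rightarrow> ereal) \<Rightarrow> 'a \<Rightarrow> ereal" where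
  "liminf_joint a x =
     (SUP \<delta>\<in>{0::real<..}. SUP N. INF \<nu>\<in>{N..}. INF y\<in>{y. norm (y - x) < \<delta>}. a \<nu> y)"

definition iota :: "'b set \<Rightarrow> 'b \<Rightarrow> ereal" where
  "iota C z = (if z \<in> C then 0 else \<infinity>)"

definition weak_conv :: "(nat \<Rightarrow> 'a::real_normed_vector measure) \<Rightarrow> 'a measure \<Rightarrow> bool" where
  "weak_conv Qs Q \<longleftrightarrow>
     (\<forall>f::'a \<Rightarrow> real. continuous_on UNIV f \<and> bounded (range f) \<longrightarrow>
        (\<lambda>n. integral\<^sup>L (Qs n) f) \<longlonglongrightarrow> integral\<^sup>L Q f)"

definition prob_measures_on_borel :: "'a::topological_space measure set \<Rightarrow> bool" where
  "prob_measures_on_borel PP \<longleftrightarrow> (\<forall>Q\<in>PP. prob_space Q \<and> sets Q = sets borel)"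

definition metric_on :: "'b set \<Rightarrow> ('b \<Rightarrow> 'b \<Rightarrow> real) \<Rightarrow> bool" where
  "metric_on S d \<longleftrightarrow>
     (\<forall>x\<in>S. \<forall>y\<in>S. 0 \<le> d x y \<and> (d x y = 0 \<longleftrightarrow> x = y) \<and> d x y = d y x) \<and>
     (\<forall>x\<in>S. \<forall>y\<in>S. \<forall>z\<in>S. d x z \<le> d x y + d y z)"

definition metrizes_weak_conv :: "'a::real_normed_vector measure set \<Rightarrow> ('a measure \<Rightarrow> 'a measure \<Rightarrow> real) \<Rightarrow> bool" where
  "metrizes_weak_conv PP d \<longleftrightarrow>
     (\<forall>Qs Q. (\<forall>n. Qs n \<in> PP) \<and> Q \<in> PP \<longrightarrow>
        ((\<lambda>n. d (Qs n) Q) \<longlonglongrightarrow> 0 \<longleftrightarrow> weak_conv Qs Q))"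

definition epi_converges ::
  "'b set \<Rightarrow> ((nat \<Rightarrow> 'b) \<Rightarrow> 'b \<Rightarrow> bool) \<Rightarrow> (nat \<Rightarrow> 'b \<Rightarrow> ereal) \<Rightarrow> ('b \<Rightarrow> ereal) \<Rightarrow> bool" where
  "epi_converges S conv \<phi>s \<phi> \<longleftrightarrow>
     (\<forall>z\<in>S.
        (\<forall>zs. (\<forall>n. zs n \<in> S) \<and> conv zs z \<longrightarrow> \<phi> z \<le> liminf (\<lambda>n. \<phi>s n (zs n))) \<and>
        (\<exists>zs. (\<forall>n. zs n \<in> S) \<and> conv zs z \<and> (\<lambda>n. \<phi>s n (zs n)) \<longlonglongrightarrow> \<phi> z))"

end

theory Submission
  imports Defs
begin

(* Lower bound: truncating g^nu(y + xi) from below at -K bounds its expectation below by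
   E[max(g^nu, -K) + K] - K plus the expectation of the lower tail g^nu 1{g^nu <= -K}, and the
   expectation of g above by the same expression for g without the tail.  The nonnegative
   part is handled by a portmanteau argument: a jointly lower semicontinuous limit of nonnegative
   integrands is approximated from below by Lipschitz minorants (inf-convolutions), which are
   bounded and continuous, so weak convergence of Q^nu applies to them and Fatou's lemma does the
   rest.  Condition (ii) makes the tail negligible as K -> oo.  If Q ~= P, the penalty
   theta^nu d(Q^nu, P^nu) tends to +oo, while (iv) keeps the expectations away from -oo.
   Recovery: take (x, Q) constant.  For Q ~= P both sides are +oo; for Q = P the expectations
   converge, from below by the lower bound and from above by the reverse Fatou lemma under the
   domination (v), while theta^nu d(P, P^nu) -> 0. *)

section \<open>Lipschitz minorants and joint lower limits\<close>

definition lipschitz_envelope :: "real \<Rightarrow> ('a::metric_space \<Rightarrow> real) \<Rightarrow> 'a \<Rightarrow> real" where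
  "lipschitz_envelope L u x = (INF y. u y + L * dist x y)"

lemma lipschitz_envelope_greatest:
  "(\<And>y. r \<le> u y + L * dist x y) \<Longrightarrow> r \<le> lipschitz_envelope L u x"
  unfolding lipschitz_envelope_def by (rule cINF_greatest) auto

lemma bdd_below_range_plus_dist:
  fixes u :: "'a::metric_space \<Rightarrow> real"
  assumes "bdd_below (range u)" "0 \<le> L"
  shows "bdd_below (range (\<lambda>y. u y + L * dist x y))"
proof -
  obtain m where "\<And>y. m \<le> u y" using assms(1) by (auto simp: bdd_below_def)
  then have "m \<le> u y + L * dist x y" for y using assms(2) by (simp add: add_increasing2)
  then show ?thesis by (intro bdd_belowI[of _ m]) auto
qed

lemma lipschitz_envelope_le:
  assumes "bdd_below (range u)" "0 \<le> L"
  shows "lipschitz_envelope L u x \<le> u x"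
  unfolding lipschitz_envelope_def
  using cINF_lower[OF bdd_below_range_plus_dist[OF assms], of x x] by simp

lemma lipschitz_on_lipschitz_envelope:
  assumes "bdd_below (range u)" "0 \<le> L"
  shows "L-lipschitz_on UNIV (lipschitz_envelope L u)"
proof (rule lipschitz_onI[OF _ assms(2)])
  have *: "lipschitz_envelope L u x \<le> lipschitz_envelope L u x' + L * dist x x'" for x x'
  proof -
    have "lipschitz_envelope L u x - L * dist x x' \<le> u y + L * dist x' y" for y
    proof -
      have "lipschitz_envelope L u x \<le> u y + L * dist x y"
        unfolding lipschitz_envelope_def by (rule cINF_lower[OF bdd_below_range_plus_dist[OF assms]]) simp
      also have "\<dots> \<le> u y + L * dist x' y + L * dist x x'"
        using mult_left_mono[OF dist_triangle[of x y x'] assms(2)] by (simp add: algebra_simps)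
      finally show ?thesis by simp
    qed
    then have "lipschitz_envelope L u x - L * dist x x' \<le> lipschitz_envelope L u x'"
      by (rule lipschitz_envelope_greatest)
    then show ?thesis by simp
  qed
  fix x x' :: 'a
  show "dist (lipschitz_envelope L u x) (lipschitz_envelope L u x') \<le> L * dist x x'"
    using *[of x x'] *[of x' x] by (simp add: dist_real_def dist_commute abs_le_iff)
qed

definition le_joint_liminf :: "'b::linorder \<Rightarrow> (nat \<Rightarrow> 'a::metric_space \<Rightarrow> 'b) \<Rightarrow> 'a \<Rightarrow> bool" where
  "le_joint_liminf c fs x \<longleftrightarrow> (\<forall>b<c. \<exists>\<delta>>0. \<exists>N. \<forall>n\<ge>N. \<forall>y. dist y x < \<delta> \<longrightarrow> b < fs n y)"

lemma liminf_joint_le_liminf: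
  fixes a :: "nat \<Rightarrow> 'a::real_normed_vector \<Rightarrow> ereal"
  assumes "xs \<longlonglongrightarrow> x"
  shows "liminf_joint a x \<le> liminf (\<lambda>n. a n (xs n))"
  unfolding liminf_joint_def
proof (intro SUP_least)
  fix \<delta> :: real and N assume "\<delta> \<in> {0<..}"
  then have ev: "eventually (\<lambda>n. norm (xs n - x) < \<delta>) sequentially"
    using assms unfolding tendsto_iff dist_norm by auto
  show "(INF n\<in>{N..}. INF y\<in>{y. norm (y - x) < \<delta>}. a n y) \<le> liminf (\<lambda>n. a n (xs n))"
    by (intro Liminf_bounded eventually_mono[OF eventually_conj[OF ev eventually_ge_at_top[of N]]])
       (auto intro!: INF_lower2)
qed

lemma le_joint_liminf_shift:
  fixes a :: "nat \<Rightarrow> 'a::real_normed_vector \<Rightarrow> ereal"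
  assumes c: "c \<le> liminf_joint a (x + \<xi>)" and xs: "xs \<longlonglongrightarrow> x"
  shows "le_joint_liminf c (\<lambda>n \<eta>. a n (xs n + \<eta>)) \<xi>"
  unfolding le_joint_liminf_def
proof (intro allI impI)
  fix b assume "b < c"
  then have "b < liminf_joint a (x + \<xi>)" using c by (rule less_le_trans)
  then obtain \<delta> N where "\<delta> > 0"
    and \<delta>: "b < (INF n\<in>{N..}. INF y\<in>{y. norm (y - (x + \<xi>)) < \<delta>}. a n y)"
    unfolding liminf_joint_def less_SUP_iff by blast
  obtain N' where N': "\<And>n. n \<ge> N' \<Longrightarrow> norm (xs n - x) < \<delta> / 2"
    using xs \<open>\<delta> > 0\<close> unfolding tendsto_iff dist_norm eventually_sequentially
    by (meson half_gt_zero)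
  have "b < a n (xs n + \<eta>)" if "n \<ge> max N N'" "dist \<eta> \<xi> < \<delta> / 2" for n \<eta>
  proof -
    have "norm ((xs n + \<eta>) - (x + \<xi>)) \<le> norm (xs n - x) + norm (\<eta> - \<xi>)"
      by (metis add_diff_add norm_triangle_ineq)
    also have "\<dots> < \<delta>" using N'[of n] that by (simp add: dist_norm)
    finally have "xs n + \<eta> \<in> {y. norm (y - (x + \<xi>)) < \<delta>}" by simp
    moreover have "b < (INF y\<in>{y. norm (y - (x + \<xi>)) < \<delta>}. a n y)"
      using less_INF_D[OF \<delta>, of n] that by simp
    ultimately show ?thesis using less_INF_D by metis
  qed
  then show "\<exists>\<delta>>0. \<exists>N. \<forall>n\<ge>N. \<forall>\<eta>. dist \<eta> \<xi> < \<delta> \<longrightarrow> b < a n (xs n + \<eta>)"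
    using \<open>\<delta> > 0\<close> by (intro exI[of _ "\<delta> / 2"] conjI exI[of _ "max N N'"]) auto
qed

definition joint_inf :: "(nat \<Rightarrow> 'a::metric_space \<Rightarrow> ennreal) \<Rightarrow> nat \<Rightarrow> 'a \<Rightarrow> ennreal" where
  "joint_inf fs k x = (INF n\<in>{k..}. INF y\<in>ball x (1 / Suc k). fs n y)"

definition joint_lower_approx :: "(nat \<Rightarrow> 'a::metric_space \<Rightarrow> ennreal) \<Rightarrow> nat \<Rightarrow> 'a \<Rightarrow> real" where
  "joint_lower_approx fs k =
     lipschitz_envelope (real k) (\<lambda>x. enn2real (min (joint_inf fs k x) (of_nat k)))"

lemma joint_lower_approx_nonneg: "0 \<le> joint_lower_approx fs k x"
  unfolding joint_lower_approx_def by (rule lipschitz_envelope_greatest) simp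

lemma
  shows joint_lower_approx_le_enn2real: "joint_lower_approx fs k x \<le> enn2real (min (joint_inf fs k x) (of_nat k))"
    and continuous_on_joint_lower_approx: "continuous_on UNIV (joint_lower_approx fs k)"
proof -
  have "bdd_below (range (\<lambda>x. enn2real (min (joint_inf fs k x) (of_nat k))))"
    by (auto intro: bdd_belowI2[of _ 0])
  then show "joint_lower_approx fs k x \<le> enn2real (min (joint_inf fs k x) (of_nat k))"
    and "continuous_on UNIV (joint_lower_approx fs k)"
    unfolding joint_lower_approx_def
    by (auto intro: lipschitz_envelope_le lipschitz_on_continuous_on[OF lipschitz_on_lipschitz_envelope])
qed

lemma joint_lower_approx_le_of_nat: "joint_lower_approx fs k x \<le> k"
  using joint_lower_approx_le_enn2real[of fs k x] enn2real_mono[of "min (joint_inf fs k x) (of_nat k)" "of_nat k"]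
  by (simp add: of_nat_less_top)

lemma joint_lower_approx_le:
  assumes "k \<le> n"
  shows "ennreal (joint_lower_approx fs k x) \<le> fs n x"
proof -
  have "min (joint_inf fs k x) (of_nat k) < top"
    by (rule le_less_trans[OF min.cobounded2 of_nat_less_top])
  then have "ennreal (joint_lower_approx fs k x) \<le> min (joint_inf fs k x) (of_nat k)"
    using ennreal_leI[OF joint_lower_approx_le_enn2real[of fs k x]] by simp
  also have "\<dots> \<le> joint_inf fs k x" by simp
  also have "\<dots> \<le> fs n x"
    unfolding joint_inf_def using assms by (intro INF_lower2[of n] INF_lower) auto
  finally show ?thesis .
qed

lemma joint_lower_approx_ge:
  assumes bound: "\<And>n y. n \<ge> N \<Longrightarrow> dist y x < \<delta> \<Longrightarrow> ennreal r \<le> fs n y"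
    and "0 < \<delta>" "0 \<le> r" and k: "N \<le> k" "r \<le> k" "2 / \<delta> < k" "2 * r / \<delta> \<le> k"
  shows "r \<le> joint_lower_approx fs k x"
  unfolding joint_lower_approx_def
proof (rule lipschitz_envelope_greatest)
  fix \<eta>
  show "r \<le> enn2real (min (joint_inf fs k \<eta>) (of_nat k)) + k * dist x \<eta>"
  proof (cases "dist \<eta> x < \<delta> / 2")
    case True
    have "1 / real (Suc k) < \<delta> / 2" using k \<open>0 < \<delta>\<close> by (simp add: field_simps)
    have "ennreal r \<le> fs n y" if "n \<ge> k" "dist y \<eta> < 1 / Suc k" for n y
    proof (rule bound)
      show "dist y x < \<delta>"
        using True that \<open>1 / Suc k < \<delta> / 2\<close> dist_triangle[of y x \<eta>] by linarith
    qed (use k that in simp)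
    then have "ennreal r \<le> joint_inf fs k \<eta>"
      unfolding joint_inf_def by (intro INF_greatest) (auto simp: dist_commute)
    moreover have "ennreal r \<le> of_nat k" using k by (simp add: ennreal_of_nat_eq_real_of_nat)
    ultimately have "r \<le> enn2real (min (joint_inf fs k \<eta>) (of_nat k))"
      using enn2real_mono[of "ennreal r"] \<open>0 \<le> r\<close> by (simp add: min_less_iff_disj of_nat_less_top)
    then show ?thesis by (simp add: add_increasing2)
  next
    case False
    have "r \<le> k * (\<delta> / 2)" using k \<open>0 < \<delta>\<close> by (simp add: field_simps)
    also have "\<dots> \<le> k * dist x \<eta>" using False by (intro mult_left_mono) (auto simp: dist_commute)
    finally show ?thesis by (simp add: add_increasing)
  qed
qed

lemma le_liminf_joint_lower_approx:
  assumes "le_joint_liminf c fs x"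
  shows "c \<le> liminf (\<lambda>k. ennreal (joint_lower_approx fs k x))"
proof (unfold le_Liminf_iff, intro allI impI)
  fix b assume "b < c"
  then obtain b' where "b < b'" "b' < c" using dense by blast
  then obtain \<delta> N where "\<delta> > 0" and \<delta>: "\<And>n y. n \<ge> N \<Longrightarrow> dist y x < \<delta> \<Longrightarrow> b' < fs n y"
    using assms unfolding le_joint_liminf_def by blast
  have "b' < top" using \<open>b' < c\<close> top.not_eq_extremum by fastforce
  then obtain r where r: "b' = ennreal r" "0 \<le> r" by (cases b') auto
  have "eventually (\<lambda>k. N \<le> k \<and> r < k \<and> 2 / \<delta> < k \<and> 2 * r / \<delta> < k) sequentially"
    using filterlim_real_sequentially
    by (intro eventually_conj eventually_ge_at_top) (simp_all add: filterlim_at_top_dense)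
  then show "eventually (\<lambda>k. b < ennreal (joint_lower_approx fs k x)) sequentially"
  proof eventually_elim
    case (elim k)
    have "r \<le> joint_lower_approx fs k x"
      using \<delta> r elim \<open>\<delta> > 0\<close> by (intro joint_lower_approx_ge[of N x \<delta> r]) (auto intro: less_imp_le)
    then show ?case using \<open>b < b'\<close> r by (simp add: order_less_le_trans ennreal_leI)
  qed
qed

section \<open>Weak convergence and jointly lower semicontinuous integrands\<close>

lemma nn_integral_bounded_continuous:
  fixes \<phi> :: "'a::real_normed_vector \<Rightarrow> real"
  assumes M: "prob_space M" "sets M = sets borel"
    and \<phi>: "continuous_on UNIV \<phi>" "bounded (range \<phi>)" "\<And>x. 0 \<le> \<phi> x"
  shows "(\<integral>\<^sup>+x. ennreal (\<phi> x) \<partial>M) = ennreal (integral\<^sup>L M \<phi>)"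
proof (rule nn_integral_eq_integral)
  obtain B where B: "\<And>x. norm (\<phi> x) \<le> B" using \<phi>(2) by (auto simp: bounded_iff)
  have "\<phi> \<in> borel_measurable M"
    using borel_measurable_continuous_onI[OF \<phi>(1)] measurable_cong_sets[OF M(2) refl] by blast
  then show "integrable M \<phi>"
    using B by (intro finite_measure.integrable_const_bound[OF prob_space.finite_measure[OF M(1)]]) auto
qed (use \<phi>(3) in simp)

lemma weak_conv_nn_integral_tendsto:
  fixes Qs :: "nat \<Rightarrow> 'a::real_normed_vector measure" and \<phi> :: "'a \<Rightarrow> real"
  assumes Qs: "\<And>n. prob_space (Qs n)" "\<And>n. sets (Qs n) = sets borel"
    and Q: "prob_space Q" "sets Q = sets borel"
    and "weak_conv Qs Q"
    and \<phi>: "continuous_on UNIV \<phi>" "bounded (range \<phi>)" "\<And>x. 0 \<le> \<phi> x"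
  shows "(\<lambda>n. \<integral>\<^sup>+x. ennreal (\<phi> x) \<partial>Qs n) \<longlonglongrightarrow> (\<integral>\<^sup>+x. ennreal (\<phi> x) \<partial>Q)"
proof -
  have "(\<lambda>n. integral\<^sup>L (Qs n) \<phi>) \<longlonglongrightarrow> integral\<^sup>L Q \<phi>"
    using \<open>weak_conv Qs Q\<close> \<phi> unfolding weak_conv_def by blast
  then show ?thesis
    by (simp add: nn_integral_bounded_continuous[OF Qs \<phi>] nn_integral_bounded_continuous[OF Q \<phi>])
qed

lemma weak_conv_nn_integral_liminf:
  fixes Qs :: "nat \<Rightarrow> 'a::real_normed_vector measure" and f :: "'a \<Rightarrow> ennreal"
  assumes Qs: "\<And>n. prob_space (Qs n)" "\<And>n. sets (Qs n) = sets borel"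
    and Q: "prob_space Q" "sets Q = sets borel"
    and "weak_conv Qs Q"
    and f: "\<And>x. le_joint_liminf (f x) fs x"
  shows "(\<integral>\<^sup>+x. f x \<partial>Q) \<le> liminf (\<lambda>n. \<integral>\<^sup>+x. fs n x \<partial>Qs n)"
proof -
  let ?\<phi> = "joint_lower_approx fs"
  have \<phi>: "continuous_on UNIV (?\<phi> k)" "bounded (range (?\<phi> k))" "\<And>x. 0 \<le> ?\<phi> k x" for k
    using joint_lower_approx_nonneg[of fs k] joint_lower_approx_le_of_nat[of fs k]
    by (auto simp: continuous_on_joint_lower_approx bounded_iff intro!: exI[of _ "real k"])
  have "?\<phi> k \<in> borel_measurable Q" for k
    using borel_measurable_continuous_onI[OF \<phi>(1)] measurable_cong_sets[OF Q(2) refl] by blast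
  have "(\<integral>\<^sup>+x. f x \<partial>Q) \<le> (\<integral>\<^sup>+x. liminf (\<lambda>k. ennreal (?\<phi> k x)) \<partial>Q)"
    using f by (intro nn_integral_mono le_liminf_joint_lower_approx)
  also have "\<dots> \<le> liminf (\<lambda>k. \<integral>\<^sup>+x. ennreal (?\<phi> k x) \<partial>Q)"
    using \<open>\<And>k. ?\<phi> k \<in> borel_measurable Q\<close> by (intro nn_integral_liminf) simp
  also have "\<dots> \<le> liminf (\<lambda>n. \<integral>\<^sup>+x. fs n x \<partial>Qs n)"
  proof (intro Liminf_le always_eventually allI)
    fix k
    have "(\<integral>\<^sup>+x. ennreal (?\<phi> k x) \<partial>Q) = liminf (\<lambda>n. \<integral>\<^sup>+x. ennreal (?\<phi> k x) \<partial>Qs n)"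
      using lim_imp_Liminf[OF _ weak_conv_nn_integral_tendsto[OF Qs Q \<open>weak_conv Qs Q\<close> \<phi>]]
      by simp
    also have "\<dots> \<le> liminf (\<lambda>n. \<integral>\<^sup>+x. fs n x \<partial>Qs n)"
      by (intro Liminf_mono eventually_mono[OF eventually_ge_at_top[of k]] nn_integral_mono
          joint_lower_approx_le)
    finally show "(\<integral>\<^sup>+x. ennreal (?\<phi> k x) \<partial>Q) \<le> liminf (\<lambda>n. \<integral>\<^sup>+x. fs n x \<partial>Qs n)" .
  qed simp
  finally show ?thesis .
qed

section \<open>Truncated expectations\<close>

definition truncation :: "real \<Rightarrow> ereal \<Rightarrow> ennreal" where
  "truncation K t = e2ennreal (max t (- ereal K) + ereal K)"

lemma borel_measurable_truncation[measurable]: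
  assumes [measurable]: "F \<in> borel_measurable M"
  shows "(\<lambda>x. truncation K (F x)) \<in> borel_measurable M"
  unfolding truncation_def by measurable

lemma less_truncation_iff:
  assumes "0 \<le> K" "c < top"
  shows "c < truncation K t \<longleftrightarrow> enn2ereal c - ereal K < t"
proof -
  obtain r where r: "c = ennreal r" "0 \<le> r" using assms(2) by (cases c) auto
  show ?thesis
  proof (cases t)
    case (real s)
    then have "max t (- ereal K) + ereal K = ereal (max s (- K) + K)" by (simp add: max_def)
    then show ?thesis using r real assms(1) by (auto simp: truncation_def ennreal_less_iff max_def)
  qed (use r assms(1) in \<open>auto simp: truncation_def\<close>)
qed

lemma truncation_add_min:
  assumes "0 \<le> K"
  shows "truncation K t + min (e2ennreal (- t)) (ennreal K) = e2ennreal t + ennreal K"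
proof (cases t)
  case (real r)
  have "truncation K t + min (e2ennreal (- t)) (ennreal K)
      = ennreal (max r (- K) + K) + ennreal (min (max (- r) 0) K)"
    using real assms by (auto simp: truncation_def max_def min_def ennreal_le_iff2 ennreal_neg)
  also have "\<dots> = ennreal (max r (- K) + K + min (max (- r) 0) K)"
    using assms by (intro ennreal_plus[symmetric]) auto
  also have "max r (- K) + K + min (max (- r) 0) K = max r 0 + K"
    using assms by (auto simp: max_def min_def)
  also have "ennreal (max r 0 + K) = e2ennreal t + ennreal K"
    using real assms by (simp add: ennreal_plus max.commute)
  finally show ?thesis .
qed (use assms in \<open>auto simp: truncation_def e2ennreal_neg\<close>)

lemma le_joint_liminf_truncation:
  assumes "0 \<le> K" "le_joint_liminf c fs x"
  shows "le_joint_liminf (truncation K c) (\<lambda>n y. truncation K (fs n y)) x"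
  unfolding le_joint_liminf_def
proof (intro allI impI)
  fix b assume b: "b < truncation K c"
  then have "b < top" using top.not_eq_extremum by fastforce
  note less_truncation = less_truncation_iff[OF assms(1) this]
  from b have "enn2ereal b - ereal K < c" by (simp add: less_truncation)
  then obtain \<delta> N where "\<delta> > 0" "\<And>n y. n \<ge> N \<Longrightarrow> dist y x < \<delta> \<Longrightarrow> enn2ereal b - ereal K < fs n y"
    using assms(2) unfolding le_joint_liminf_def by meson
  then show "\<exists>\<delta>>0. \<exists>N. \<forall>n\<ge>N. \<forall>y. dist y x < \<delta> \<longrightarrow> b < truncation K (fs n y)"
    by (auto simp: less_truncation)
qed

lemma e2ennreal_uminus_le_min_add_tail:
  assumes "0 \<le> K"
  shows "e2ennreal (- t) \<le> min (e2ennreal (- t)) (ennreal K) + e2ennreal (- (if t \<le> - ereal K then t else 0))"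
proof (cases "t \<le> - ereal K")
  case False
  then have "- t \<le> ereal K" by (metis ereal_uminus_le_reorder linorder_le_cases)
  then have "e2ennreal (- t) \<le> ennreal K" using e2ennreal_mono by fastforce
  then show ?thesis using False by simp
qed (simp add: add_increasing)

lemma expect_eq_diff:
  "(\<integral>\<^sup>+x. e2ennreal (F x) \<partial>M) < top \<Longrightarrow>
    expect M F = enn2ereal (\<integral>\<^sup>+x. e2ennreal (F x) \<partial>M) - enn2ereal (\<integral>\<^sup>+x. e2ennreal (- F x) \<partial>M)"
  by (simp add: expect_def Let_def)

lemma expect_eq_top: "(\<integral>\<^sup>+x. e2ennreal (F x) \<partial>M) = top \<Longrightarrow> expect M F = \<infinity>"
  by (simp add: expect_def Let_def)

lemma expect_nonpos:
  assumes "\<And>x. F x \<le> 0"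
  shows "expect M F = - enn2ereal (\<integral>\<^sup>+x. e2ennreal (- F x) \<partial>M)"
  using assms by (simp add: expect_eq_diff e2ennreal_neg zero_ennreal.rep_eq)

lemma nn_integral_min_le_const:
  "prob_space M \<Longrightarrow> (\<integral>\<^sup>+x. min (f x) (ennreal K) \<partial>M) \<le> ennreal K"
  using nn_integral_mono[of M "\<lambda>x. min (f x) (ennreal K)" "\<lambda>_. ennreal K"]
  by (simp add: prob_space.emeasure_space_1)

lemma nn_integral_truncation:
  assumes M: "prob_space M" and [measurable]: "F \<in> borel_measurable M" and K: "0 \<le> K"
  shows "enn2ereal (\<integral>\<^sup>+x. truncation K (F x) \<partial>M) - ereal K
           = enn2ereal (\<integral>\<^sup>+x. e2ennreal (F x) \<partial>M)
             - enn2ereal (\<integral>\<^sup>+x. min (e2ennreal (- F x)) (ennreal K) \<partial>M)"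
proof -
  define T where "T = (\<integral>\<^sup>+x. truncation K (F x) \<partial>M)"
  define m where "m = (\<integral>\<^sup>+x. min (e2ennreal (- F x)) (ennreal K) \<partial>M)"
  define pos where "pos = (\<integral>\<^sup>+x. e2ennreal (F x) \<partial>M)"
  have "T + m = (\<integral>\<^sup>+x. truncation K (F x) + min (e2ennreal (- F x)) (ennreal K) \<partial>M)"
    unfolding T_def m_def by (rule nn_integral_add[symmetric]) measurable
  also have "\<dots> = (\<integral>\<^sup>+x. e2ennreal (F x) + ennreal K \<partial>M)"
    by (simp add: truncation_add_min[OF K])
  also have "\<dots> = pos + ennreal K"
    unfolding pos_def by (subst nn_integral_add) (auto simp: prob_space.emeasure_space_1[OF M])
  finally have "enn2ereal T + enn2ereal m = enn2ereal pos + ereal K"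
    using K by (metis plus_ennreal.rep_eq enn2ereal_ennreal)
  moreover have "enn2ereal m \<le> ereal K"
    using nn_integral_min_le_const[OF M] K unfolding m_def by (metis less_eq_ennreal.rep_eq enn2ereal_ennreal)
  ultimately show ?thesis
    unfolding T_def[symmetric] m_def[symmetric] pos_def[symmetric] using enn2ereal_nonneg[of m]
    by (cases "enn2ereal T"; cases "enn2ereal pos"; cases "enn2ereal m") auto
qed

lemma expect_le_truncation:
  assumes "prob_space M" "F \<in> borel_measurable M" "0 \<le> K"
  shows "expect M F \<le> enn2ereal (\<integral>\<^sup>+x. truncation K (F x) \<partial>M) - ereal K"
proof (cases "(\<integral>\<^sup>+x. e2ennreal (F x) \<partial>M) = top")
  case False
  then have "expect M F = enn2ereal (\<integral>\<^sup>+x. e2ennreal (F x) \<partial>M) - enn2ereal (\<integral>\<^sup>+x. e2ennreal (- F x) \<partial>M)"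
    by (simp add: expect_eq_diff top.not_eq_extremum)
  also have "\<dots> \<le> enn2ereal (\<integral>\<^sup>+x. e2ennreal (F x) \<partial>M)
                  - enn2ereal (\<integral>\<^sup>+x. min (e2ennreal (- F x)) (ennreal K) \<partial>M)"
    using nn_integral_mono[of M "\<lambda>x. min (e2ennreal (- F x)) (ennreal K)" "\<lambda>x. e2ennreal (- F x)"]
    by (intro ereal_minus_mono order_refl) (simp add: less_eq_ennreal.rep_eq[symmetric])
  finally show ?thesis by (simp add: nn_integral_truncation[OF assms])
next
  case True
  moreover have "enn2ereal (\<integral>\<^sup>+x. min (e2ennreal (- F x)) (ennreal K) \<partial>M) \<le> ereal K"
    using nn_integral_min_le_const[OF assms(1)] assms(3) by (metis less_eq_ennreal.rep_eq enn2ereal_ennreal)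
  ultimately show ?thesis by (auto simp: nn_integral_truncation[OF assms] expect_eq_top)
qed

lemma truncation_le_expect:
  assumes M: "prob_space M" and F[measurable]: "F \<in> borel_measurable M" and K: "0 \<le> K"
  shows "enn2ereal (\<integral>\<^sup>+x. truncation K (F x) \<partial>M) - ereal K
           + expect M (\<lambda>x. if F x \<le> - ereal K then F x else 0) \<le> expect M F"
proof (cases "(\<integral>\<^sup>+x. e2ennreal (F x) \<partial>M) = top")
  case False
  define pos where "pos = (\<integral>\<^sup>+x. e2ennreal (F x) \<partial>M)"
  define m where "m = (\<integral>\<^sup>+x. min (e2ennreal (- F x)) (ennreal K) \<partial>M)"
  define C where "C = (\<integral>\<^sup>+x. e2ennreal (- (if F x \<le> - ereal K then F x else 0)) \<partial>M)"
  have "enn2ereal m \<le> ereal K"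
    using nn_integral_min_le_const[OF M] K unfolding m_def by (metis less_eq_ennreal.rep_eq enn2ereal_ennreal)
  moreover have "expect M (\<lambda>x. if F x \<le> - ereal K then F x else 0) = - enn2ereal C"
    unfolding C_def using K by (intro expect_nonpos) (auto intro: order_trans)
  ultimately have "enn2ereal (\<integral>\<^sup>+x. truncation K (F x) \<partial>M) - ereal K
        + expect M (\<lambda>x. if F x \<le> - ereal K then F x else 0)
      = enn2ereal pos - (enn2ereal m + enn2ereal C)"
    using enn2ereal_nonneg[of m] enn2ereal_nonneg[of C]
    unfolding nn_integral_truncation[OF M F K] pos_def[symmetric] m_def[symmetric]
    by (cases "enn2ereal pos"; cases "enn2ereal m"; cases "enn2ereal C") auto
  also have "\<dots> \<le> enn2ereal pos - enn2ereal (\<integral>\<^sup>+x. e2ennreal (- F x) \<partial>M)"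
  proof (intro ereal_minus_mono order_refl)
    have "(\<integral>\<^sup>+x. e2ennreal (- F x) \<partial>M)
        \<le> (\<integral>\<^sup>+x. min (e2ennreal (- F x)) (ennreal K)
                  + e2ennreal (- (if F x \<le> - ereal K then F x else 0)) \<partial>M)"
      by (intro nn_integral_mono e2ennreal_uminus_le_min_add_tail[OF K])
    also have "\<dots> = m + C" unfolding m_def C_def by (rule nn_integral_add) measurable
    finally show "enn2ereal (\<integral>\<^sup>+x. e2ennreal (- F x) \<partial>M) \<le> enn2ereal m + enn2ereal C"
      by (simp flip: plus_ennreal.rep_eq add: less_eq_ennreal.rep_eq)
  qed
  also have "\<dots> = expect M F"
    using False by (simp add: expect_eq_diff pos_def top.not_eq_extremum)
  finally show ?thesis .
qed (simp add: expect_eq_top)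

section \<open>Lower and upper limits of expectations\<close>

lemma expect_plus_liminf_tail_le_liminf:
  fixes Qs :: "nat \<Rightarrow> 'a::real_normed_vector measure" and G :: "'a \<Rightarrow> ereal"
  assumes Qs: "\<And>n. prob_space (Qs n)" "\<And>n. sets (Qs n) = sets borel"
    and Q: "prob_space Q" "sets Q = sets borel" and "weak_conv Qs Q"
    and G: "G \<in> borel_measurable Q" and Gs: "\<And>n. Gs n \<in> borel_measurable (Qs n)"
    and lsc: "\<And>\<xi>. le_joint_liminf (G \<xi>) Gs \<xi>" and K: "0 \<le> K"
    and tail: "- \<infinity> < liminf (\<lambda>n. expect (Qs n) (\<lambda>\<xi>. if Gs n \<xi> \<le> - ereal K then Gs n \<xi> else 0))"
  shows "expect Q G + liminf (\<lambda>n. expect (Qs n) (\<lambda>\<xi>. if Gs n \<xi> \<le> - ereal K then Gs n \<xi> else 0))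
           \<le> liminf (\<lambda>n. expect (Qs n) (Gs n))"
proof -
  let ?tail = "\<lambda>n. expect (Qs n) (\<lambda>\<xi>. if Gs n \<xi> \<le> - ereal K then Gs n \<xi> else 0)"
  let ?T = "\<lambda>n. enn2ereal (\<integral>\<^sup>+\<xi>. truncation K (Gs n \<xi>) \<partial>Qs n) - ereal K"
  have "(\<integral>\<^sup>+\<xi>. truncation K (G \<xi>) \<partial>Q) \<le> liminf (\<lambda>n. \<integral>\<^sup>+\<xi>. truncation K (Gs n \<xi>) \<partial>Qs n)"
    using lsc by (intro weak_conv_nn_integral_liminf[OF Qs Q \<open>weak_conv Qs Q\<close>] le_joint_liminf_truncation K)
  then have "enn2ereal (\<integral>\<^sup>+\<xi>. truncation K (G \<xi>) \<partial>Q)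
      \<le> liminf (\<lambda>n. enn2ereal (\<integral>\<^sup>+\<xi>. truncation K (Gs n \<xi>) \<partial>Qs n))"
    by (simp add: Liminf_compose_continuous_mono[OF continuous_on_enn2ereal] mono_def
        less_eq_ennreal.rep_eq)
  then have "enn2ereal (\<integral>\<^sup>+\<xi>. truncation K (G \<xi>) \<partial>Q) - ereal K \<le> liminf ?T"
    using Liminf_add_ereal_right[of sequentially "- ereal K"] by (simp add: minus_ereal_def add_right_mono)
  have "- ereal K \<le> enn2ereal x - ereal K" for x
    using enn2ereal_nonneg[of x] by (cases "enn2ereal x") auto
  then have "- ereal K \<le> liminf ?T"
    by (intro Liminf_bounded always_eventually allI)
  then have "liminf ?T \<noteq> - \<infinity>" by auto
  have "expect Q G + liminf ?tail \<le> enn2ereal (\<integral>\<^sup>+\<xi>. truncation K (G \<xi>) \<partial>Q) - ereal K + liminf ?tail"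
    by (intro add_right_mono expect_le_truncation[OF Q(1) G K])
  also have "\<dots> \<le> liminf ?T + liminf ?tail"
    by (intro add_right_mono) fact
  also have "\<dots> \<le> liminf (\<lambda>n. ?T n + ?tail n)"
    using \<open>liminf ?T \<noteq> - \<infinity>\<close> tail by (intro ereal_liminf_add_mono) auto
  also have "\<dots> \<le> liminf (\<lambda>n. expect (Qs n) (Gs n))"
    by (intro Liminf_mono always_eventually allI truncation_le_expect[OF Qs(1) Gs K])
  finally show ?thesis .
qed

lemma expect_le_liminf_expect:
  fixes Qs :: "nat \<Rightarrow> 'a::real_normed_vector measure" and G :: "'a \<Rightarrow> ereal"
  assumes Qs: "\<And>n. prob_space (Qs n)" "\<And>n. sets (Qs n) = sets borel"
    and Q: "prob_space Q" "sets Q = sets borel" and "weak_conv Qs Q"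
    and G: "G \<in> borel_measurable Q" and Gs: "\<And>n. Gs n \<in> borel_measurable (Qs n)"
    and lsc: "\<And>\<xi>. le_joint_liminf (G \<xi>) Gs \<xi>"
    and tails: "0 \<le> Liminf at_top (\<lambda>K::real.
                  liminf (\<lambda>n. expect (Qs n) (\<lambda>\<xi>. if Gs n \<xi> \<le> - ereal K then Gs n \<xi> else 0)))"
  shows "expect Q G \<le> liminf (\<lambda>n. expect (Qs n) (Gs n))"
proof (rule ereal_le_epsilon2)
  fix e :: real assume "0 < e"
  let ?tail = "\<lambda>K n. expect (Qs n) (\<lambda>\<xi>. if Gs n \<xi> \<le> - ereal K then Gs n \<xi> else 0)"
  have "eventually (\<lambda>K. ereal (- e) < liminf (?tail K)) at_top"
    using tails \<open>0 < e\<close> by (simp add: le_Liminf_iff)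
  then obtain K where "0 \<le> K" and K: "ereal (- e) < liminf (?tail K)"
    unfolding eventually_at_top_linorder by (meson max.cobounded1 max.cobounded2)
  have "expect Q G + ereal (- e) \<le> expect Q G + liminf (?tail K)"
    using K by (intro add_left_mono) simp
  also have "\<dots> \<le> liminf (\<lambda>n. expect (Qs n) (Gs n))"
    using K by (intro expect_plus_liminf_tail_le_liminf[OF Qs Q \<open>weak_conv Qs Q\<close> G Gs lsc \<open>0 \<le> K\<close>]) auto
  finally show "expect Q G \<le> liminf (\<lambda>n. expect (Qs n) (Gs n)) + ereal e"
    by (cases "expect Q G"; cases "liminf (\<lambda>n. expect (Qs n) (Gs n))") auto
qed

lemma borel_measurable_shift:
  fixes g :: "'a::real_normed_vector \<Rightarrow> ereal"
  assumes "g \<in> borel_measurable borel" "sets M = sets borel"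
  shows "(\<lambda>\<xi>. g (y + \<xi>)) \<in> borel_measurable M"
proof -
  have "(\<lambda>\<xi>. y + \<xi>) \<in> borel_measurable borel"
    by (intro borel_measurable_continuous_onI continuous_intros)
  then show ?thesis
    using measurable_compose[OF _ assms(1)] measurable_cong_sets[OF assms(2) refl] by blast
qed

lemma expect_shift_le_liminf:
  fixes Qs :: "nat \<Rightarrow> 'a::real_normed_vector measure" and g :: "'a \<Rightarrow> ereal"
  assumes Qs: "\<And>n. prob_space (Qs n)" "\<And>n. sets (Qs n) = sets borel"
    and Q: "prob_space Q" "sets Q = sets borel" and "weak_conv Qs Q"
    and g: "g \<in> borel_measurable borel" and gs: "\<And>n. gs n \<in> borel_measurable borel"
    and lsc: "\<And>y. g y \<le> liminf_joint gs y" and "xs \<longlonglongrightarrow> x"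
    and tails: "0 \<le> Liminf at_top (\<lambda>K::real. liminf_joint
           (\<lambda>n y. expect (Qs n) (\<lambda>\<xi>. if gs n (y + \<xi>) \<le> - ereal K then gs n (y + \<xi>) else 0)) x)"
  shows "expect Q (\<lambda>\<xi>. g (x + \<xi>)) \<le> liminf (\<lambda>n. expect (Qs n) (\<lambda>\<xi>. gs n (xs n + \<xi>)))"
proof (rule expect_le_liminf_expect[OF Qs Q \<open>weak_conv Qs Q\<close>])
  show "(\<lambda>\<xi>. g (x + \<xi>)) \<in> borel_measurable Q" "(\<lambda>\<xi>. gs n (xs n + \<xi>)) \<in> borel_measurable (Qs n)" for n
    using borel_measurable_shift g gs Q(2) Qs(2) by blast+
  show "le_joint_liminf (g (x + \<xi>)) (\<lambda>n \<xi>. gs n (xs n + \<xi>)) \<xi>" for \<xi>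
    using lsc \<open>xs \<longlonglongrightarrow> x\<close> by (rule le_joint_liminf_shift)
  show "0 \<le> Liminf at_top (\<lambda>K::real. liminf (\<lambda>n. expect (Qs n)
          (\<lambda>\<xi>. if gs n (xs n + \<xi>) \<le> - ereal K then gs n (xs n + \<xi>) else 0)))"
    using tails by (elim order_trans) (intro Liminf_mono always_eventually allI liminf_joint_le_liminf \<open>xs \<longlonglongrightarrow> x\<close>)
qed

lemma limsup_expect_le_dominated:
  fixes G :: "'a \<Rightarrow> ereal" and h :: "'a \<Rightarrow> real"
  assumes [measurable]: "G \<in> borel_measurable M" "\<And>n. Gs n \<in> borel_measurable M"
    and "integrable M h" and dom: "AE \<xi> in M. \<forall>n. Gs n \<xi> \<le> ereal (h \<xi>)"
    and conv: "\<And>\<xi>. (\<lambda>n. Gs n \<xi>) \<longlonglongrightarrow> G \<xi>"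
  shows "limsup (\<lambda>n. expect M (Gs n)) \<le> expect M G"
proof -
  define pos where "pos = (\<integral>\<^sup>+\<xi>. e2ennreal (G \<xi>) \<partial>M)"
  define neg where "neg = (\<integral>\<^sup>+\<xi>. e2ennreal (- G \<xi>) \<partial>M)"
  define pos\<^sub>n where "pos\<^sub>n n = (\<integral>\<^sup>+\<xi>. e2ennreal (Gs n \<xi>) \<partial>M)" for n
  define neg\<^sub>n where "neg\<^sub>n n = (\<integral>\<^sup>+\<xi>. e2ennreal (- Gs n \<xi>) \<partial>M)" for n
  have [measurable]: "h \<in> borel_measurable M" using \<open>integrable M h\<close> by auto
  have h_finite: "(\<integral>\<^sup>+\<xi>. ennreal (h \<xi>) \<partial>M) < top"
    using integrableD(2)[OF \<open>integrable M h\<close>] by (simp add: top.not_eq_extremum)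
  have dom': "AE \<xi> in M. e2ennreal (Gs n \<xi>) \<le> ennreal (h \<xi>)" for n
    using dom by eventually_elim (metis e2ennreal_ereal e2ennreal_mono)
  then have pos\<^sub>n_le: "pos\<^sub>n n \<le> (\<integral>\<^sup>+\<xi>. ennreal (h \<xi>) \<partial>M)" for n
    unfolding pos\<^sub>n_def by (rule nn_integral_mono_AE)
  have pos_lim: "pos\<^sub>n \<longlonglongrightarrow> pos"
    unfolding pos\<^sub>n_def[abs_def] pos_def
    by (rule nn_integral_dominated_convergence[where w="\<lambda>\<xi>. ennreal (h \<xi>)"])
       (use dom' h_finite conv in \<open>auto intro!: tendsto_e2ennrealI\<close>)
  have "pos \<le> (\<integral>\<^sup>+\<xi>. ennreal (h \<xi>) \<partial>M)"
    by (rule tendsto_upperbound[OF pos_lim]) (simp_all add: pos\<^sub>n_le)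
  then have "pos < top" using h_finite by (rule le_less_trans)
  have "pos\<^sub>n n < top" for n
    using pos\<^sub>n_le h_finite by (rule le_less_trans)
  have neg_le: "neg \<le> liminf neg\<^sub>n"
  proof -
    have "neg = (\<integral>\<^sup>+\<xi>. liminf (\<lambda>n. e2ennreal (- Gs n \<xi>)) \<partial>M)"
      unfolding neg_def
      by (intro nn_integral_cong lim_imp_Liminf[symmetric] tendsto_e2ennrealI tendsto_uminus_ereal conv) auto
    also have "\<dots> \<le> liminf neg\<^sub>n" unfolding neg\<^sub>n_def by (rule nn_integral_liminf) measurable
    finally show ?thesis .
  qed
  have "limsup (\<lambda>n. expect M (Gs n)) = limsup (\<lambda>n. enn2ereal (pos\<^sub>n n) + - enn2ereal (neg\<^sub>n n))"
    using \<open>\<And>n. pos\<^sub>n n < top\<close> by (simp add: expect_eq_diff pos\<^sub>n_def neg\<^sub>n_def minus_ereal_def)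
  also have "\<dots> = enn2ereal pos - liminf (\<lambda>n. enn2ereal (neg\<^sub>n n))"
    using \<open>pos < top\<close> pos_lim
    by (subst ereal_limsup_lim_add[of _ "enn2ereal pos"]) (simp_all add: ereal_Limsup_uminus minus_ereal_def)
  also have "\<dots> \<le> enn2ereal pos - enn2ereal neg"
    using neg_le by (intro ereal_minus_mono)
      (simp_all add: Liminf_compose_continuous_mono[OF continuous_on_enn2ereal] mono_def less_eq_ennreal.rep_eq)
  also have "\<dots> = expect M G"
    using \<open>pos < top\<close> by (simp add: expect_eq_diff pos_def neg_def)
  finally show ?thesis .
qed

section \<open>Penalties\<close>

lemma tendsto_zero_if_mult_at_top:
  fixes a \<theta> :: "nat \<Rightarrow> real"
  assumes \<theta>: "filterlim \<theta> at_top sequentially" and "(\<lambda>n. \<theta> n * a n) \<longlonglongrightarrow> 0" "\<And>n. 0 \<le> a n"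
  shows "a \<longlonglongrightarrow> 0"
proof (rule tendsto_sandwich[of "\<lambda>_. 0" _ _ "\<lambda>n. \<theta> n * a n"])
  have "eventually (\<lambda>n. 1 \<le> \<theta> n) sequentially"
    using \<theta> by (simp add: filterlim_at_top)
  then show "eventually (\<lambda>n. a n \<le> \<theta> n * a n) sequentially"
    by eventually_elim (use assms(3) mult_right_mono[of 1] in force)
qed (use assms in auto)

lemma metric_onD:
  assumes "metric_on S d" "x \<in> S" "y \<in> S"
  shows "0 \<le> d x y" "d x y = 0 \<longleftrightarrow> x = y" "d x y = d y x"
  using assms unfolding metric_on_def by auto

lemma metric_on_triangle:
  assumes "metric_on S d" "x \<in> S" "y \<in> S" "z \<in> S"
  shows "d x z \<le> d x y + d y z"
  using assms unfolding metric_on_def by auto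

lemma metric_on_penalty_at_top:
  assumes d: "metric_on S d" and S: "P \<in> S" "Q \<in> S" "\<And>n. Qs n \<in> S" "\<And>n. Ps n \<in> S"
    and "Q \<noteq> P" and Qs: "(\<lambda>n. d (Qs n) Q) \<longlonglongrightarrow> 0" and Ps: "(\<lambda>n. d (Ps n) P) \<longlonglongrightarrow> 0"
    and \<theta>: "filterlim \<theta> at_top sequentially"
  shows "filterlim (\<lambda>n. \<theta> n * d (Qs n) (Ps n)) at_top sequentially"
proof -
  define D where "D = d Q P"
  have "0 < D"
    using metric_onD[OF d S(2,1)] \<open>Q \<noteq> P\<close> unfolding D_def by linarith
  have far: "D / 2 \<le> d (Qs n) (Ps n)" if "d (Qs n) Q < D / 4" "d (Ps n) P < D / 4" for n
    using metric_on_triangle[OF d S(2,3,1), of n] metric_on_triangle[OF d S(3,4,1), of n n]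
      metric_onD(3)[OF d S(2,3), of n] that unfolding D_def by linarith
  have "eventually (\<lambda>n. d (Qs n) Q < D / 4) sequentially"
    using order_tendstoD(2)[OF Qs, of "D / 4"] \<open>0 < D\<close> by simp
  moreover have "eventually (\<lambda>n. d (Ps n) P < D / 4) sequentially"
    using order_tendstoD(2)[OF Ps, of "D / 4"] \<open>0 < D\<close> by simp
  moreover have "eventually (\<lambda>n. 0 \<le> \<theta> n) sequentially"
    using \<theta> by (simp add: filterlim_at_top)
  ultimately have "eventually (\<lambda>n. D / 2 * \<theta> n \<le> \<theta> n * d (Qs n) (Ps n)) sequentially"
  proof eventually_elim
    case (elim n)
    then show ?case using mult_left_mono[OF far[of n], of "\<theta> n"] by (simp add: mult.commute)
  qed
  moreover have "filterlim (\<lambda>n. D / 2 * \<theta> n) at_top sequentially"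
    using \<open>0 < D\<close> by (intro filterlim_tendsto_pos_mult_at_top[OF tendsto_const _ \<theta>]) simp
  ultimately show ?thesis by (rule filterlim_at_top_mono[rotated])
qed

lemma liminf_add_penalty_ge:
  fixes u :: "nat \<Rightarrow> ereal" and p :: "nat \<Rightarrow> real"
  assumes "a \<le> liminf u" "- \<infinity> < a" "\<And>n. 0 \<le> p n"
    and "Q \<noteq> P \<Longrightarrow> filterlim p at_top sequentially"
  shows "a + iota {P} Q \<le> liminf (\<lambda>n. u n + ereal (p n))"
proof (cases "Q = P")
  case True
  have "liminf u \<le> liminf (\<lambda>n. u n + ereal (p n))"
    using assms(3) by (intro Liminf_mono always_eventually allI) (simp add: add_increasing2)
  then show ?thesis using True assms(1) by (simp add: iota_def)
next
  case False
  then have "liminf (\<lambda>n. ereal (p n)) = \<infinity>"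
    using assms(4) by (simp add: Liminf_PInfty[symmetric] tendsto_PInfty_eq_at_top)
  moreover have "liminf u \<noteq> - \<infinity>" using assms(1,2) by auto
  ultimately have "\<infinity> \<le> liminf (\<lambda>n. u n + ereal (p n))"
    using ereal_liminf_add_mono[of u "\<lambda>n. ereal (p n)"] by auto
  then show ?thesis by (simp add: top_unique[unfolded top_ereal_def])
qed

locale penalized_expectations =
  fixes PP :: "'a::real_normed_vector measure set"
    and d :: "'a measure \<Rightarrow> 'a measure \<Rightarrow> real"
    and g :: "'a \<Rightarrow> ereal" and gs :: "nat \<Rightarrow> 'a \<Rightarrow> ereal"
    and P :: "'a measure" and Ps :: "nat \<Rightarrow> 'a measure"
    and \<theta> :: "nat \<Rightarrow> real"
  assumes PP: "prob_measures_on_borel PP"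
    and d_metric: "metric_on PP d"
    and d_weak: "metrizes_weak_conv PP d"
    and P_in: "P \<in> PP" and Ps_in: "\<forall>n. Ps n \<in> PP"
    and \<theta>_nonneg: "\<forall>n. 0 \<le> \<theta> n"
    and \<theta>_inf: "filterlim \<theta> at_top sequentially"
    and \<theta>_d: "(\<lambda>n. \<theta> n * d (Ps n) P) \<longlonglongrightarrow> 0"
    and meas_g: "g \<in> borel_measurable borel"
    and meas_gs: "\<forall>n. gs n \<in> borel_measurable borel"
    and cond_ii: "\<forall>x Qs Q. (\<forall>n. Qs n \<in> PP) \<and> Q \<in> PP \<and> (\<lambda>n. d (Qs n) Q) \<longlonglongrightarrow> 0 \<longrightarrow>
        Liminf at_top (\<lambda>K::real. liminf_joint
           (\<lambda>n y. expect (Qs n) (\<lambda>\<xi>. if gs n (y + \<xi>) \<le> - ereal K then gs n (y + \<xi>) else 0)) x) = 0"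
    and cond_iii: "\<forall>x. g x \<le> liminf_joint gs x"
    and cond_iv: "\<forall>x. \<forall>Q\<in>PP. expect Q (\<lambda>\<xi>. g (x + \<xi>)) > - \<infinity>"
    and cond_v: "\<forall>x. \<exists>h::'a \<Rightarrow> real. (\<forall>\<xi>. 0 \<le> h \<xi>) \<and> integrable P h \<and>
        (AE \<xi> in P. \<forall>n. gs n (x + \<xi>) \<le> ereal (h \<xi>)) \<and> (\<lambda>n. gs n x) \<longlonglongrightarrow> g x"
begin

lemma prob_space_PP: "Q \<in> PP \<Longrightarrow> prob_space Q"
  and sets_PP: "Q \<in> PP \<Longrightarrow> sets Q = sets borel"
  using PP unfolding prob_measures_on_borel_def by auto

lemma d_Ps_P: "(\<lambda>n. d (Ps n) P) \<longlonglongrightarrow> 0"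
proof (rule tendsto_zero_if_mult_at_top[OF \<theta>_inf \<theta>_d])
  show "0 \<le> d (Ps n) P" for n using metric_onD(1)[OF d_metric] Ps_in P_in by blast
qed

lemma expect_le_liminf:
  assumes "Q \<in> PP" "\<forall>n. Qs n \<in> PP" "xs \<longlonglongrightarrow> x" "(\<lambda>n. d (Qs n) Q) \<longlonglongrightarrow> 0"
  shows "expect Q (\<lambda>\<xi>. g (x + \<xi>)) \<le> liminf (\<lambda>n. expect (Qs n) (\<lambda>\<xi>. gs n (xs n + \<xi>)))"
proof (rule expect_shift_le_liminf)
  show "prob_space (Qs n)" "sets (Qs n) = sets borel" for n
    using assms(2) prob_space_PP sets_PP by blast+
  show "prob_space Q" "sets Q = sets borel"
    using assms(1) prob_space_PP sets_PP by blast+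
  show "gs n \<in> borel_measurable borel" for n
    using meas_gs by blast
  show "g y \<le> liminf_joint gs y" for y
    using cond_iii by blast
  show "weak_conv Qs Q" using d_weak assms unfolding metrizes_weak_conv_def by blast
  show "0 \<le> Liminf at_top (\<lambda>K::real. liminf_joint (\<lambda>n y. expect (Qs n)
          (\<lambda>\<xi>. if gs n (y + \<xi>) \<le> - ereal K then gs n (y + \<xi>) else 0)) x)"
    using spec[OF spec[OF spec[OF cond_ii, of x], of Qs], of Q] assms by simp
qed (fact meas_g assms(3))+

lemma penalized_liminf:
  assumes "Q \<in> PP" "\<forall>n. Qs n \<in> PP" "xs \<longlonglongrightarrow> x" "(\<lambda>n. d (Qs n) Q) \<longlonglongrightarrow> 0"
  shows "expect Q (\<lambda>\<xi>. g (x + \<xi>)) + iota {P} Q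
           \<le> liminf (\<lambda>n. expect (Qs n) (\<lambda>\<xi>. gs n (xs n + \<xi>)) + ereal (\<theta> n * d (Qs n) (Ps n)))"
proof (rule liminf_add_penalty_ge[OF expect_le_liminf[OF assms]])
  show "0 \<le> \<theta> n * d (Qs n) (Ps n)" for n
    using \<theta>_nonneg metric_onD(1)[OF d_metric] assms(2) Ps_in by simp
  show "filterlim (\<lambda>n. \<theta> n * d (Qs n) (Ps n)) at_top sequentially" if "Q \<noteq> P"
    using assms(2) Ps_in
    by (intro metric_on_penalty_at_top[OF d_metric P_in assms(1) _ _ that assms(4) d_Ps_P \<theta>_inf]) auto
  show "- \<infinity> < expect Q (\<lambda>\<xi>. g (x + \<xi>))" using cond_iv assms(1) by blast
qed

lemma penalized_recovery:
  assumes "Q \<in> PP"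
  shows "(\<lambda>n. expect Q (\<lambda>\<xi>. gs n (x + \<xi>)) + ereal (\<theta> n * d Q (Ps n)))
           \<longlonglongrightarrow> expect Q (\<lambda>\<xi>. g (x + \<xi>)) + iota {P} Q"
proof (cases "Q = P")
  case True
  obtain h where h: "integrable P h" "AE \<xi> in P. \<forall>n. gs n (x + \<xi>) \<le> ereal (h \<xi>)"
    using cond_v by blast
  have "limsup (\<lambda>n. expect P (\<lambda>\<xi>. gs n (x + \<xi>))) \<le> expect P (\<lambda>\<xi>. g (x + \<xi>))"
  proof (rule limsup_expect_le_dominated[OF _ _ h])
    show "(\<lambda>\<xi>. g (x + \<xi>)) \<in> borel_measurable P" "(\<lambda>\<xi>. gs n (x + \<xi>)) \<in> borel_measurable P" for n
      using borel_measurable_shift meas_g meas_gs sets_PP[OF P_in] by blast+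
    show "(\<lambda>n. gs n (x + \<xi>)) \<longlonglongrightarrow> g (x + \<xi>)" for \<xi>
      using cond_v by blast
  qed
  moreover have "expect P (\<lambda>\<xi>. g (x + \<xi>)) \<le> liminf (\<lambda>n. expect P (\<lambda>\<xi>. gs n (x + \<xi>)))"
    using expect_le_liminf[of P "\<lambda>_. P"] P_in metric_onD(2)[OF d_metric P_in P_in] by simp
  ultimately have "(\<lambda>n. expect P (\<lambda>\<xi>. gs n (x + \<xi>))) \<longlonglongrightarrow> expect P (\<lambda>\<xi>. g (x + \<xi>))"
    using Liminf_le_Limsup[of sequentially "\<lambda>n. expect P (\<lambda>\<xi>. gs n (x + \<xi>))"]
    by (intro Liminf_eq_Limsup) (simp_all add: order_antisym)
  moreover have "(\<lambda>n. ereal (\<theta> n * d P (Ps n))) \<longlonglongrightarrow> 0"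
    using \<theta>_d metric_onD(3)[OF d_metric P_in] Ps_in by (simp add: zero_ereal_def)
  ultimately have "(\<lambda>n. expect P (\<lambda>\<xi>. gs n (x + \<xi>)) + ereal (\<theta> n * d P (Ps n)))
      \<longlonglongrightarrow> expect P (\<lambda>\<xi>. g (x + \<xi>)) + 0"
    by (intro tendsto_add_ereal_general1) simp_all
  then show ?thesis using True by (simp add: iota_def)
next
  case False
  have "expect Q (\<lambda>\<xi>. g (x + \<xi>)) + iota {P} Q = \<infinity>"
    using False cond_iv assms by (auto simp: iota_def)
  moreover have "d Q Q = 0" using metric_onD(2)[OF d_metric assms assms] by simp
  then have "expect Q (\<lambda>\<xi>. g (x + \<xi>)) + iota {P} Q
      \<le> liminf (\<lambda>n. expect Q (\<lambda>\<xi>. gs n (x + \<xi>)) + ereal (\<theta> n * d Q (Ps n)))"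
    using penalized_liminf[of Q "\<lambda>_. Q" "\<lambda>_. x" x] assms by simp
  then show ?thesis
    unfolding \<open>expect Q (\<lambda>\<xi>. g (x + \<xi>)) + iota {P} Q = \<infinity>\<close> by (simp add: Liminf_PInfty)
qed

end

theorem proposition4p2:
  fixes PP :: "'a::real_normed_vector measure set"
    and d :: "'a measure \<Rightarrow> 'a measure \<Rightarrow> real"
    and g :: "'a \<Rightarrow> ereal" and gs :: "nat \<Rightarrow> 'a \<Rightarrow> ereal"
    and P :: "'a measure" and Ps :: "nat \<Rightarrow> 'a measure"
    and \<theta> :: "nat \<Rightarrow> real"
  assumes PP: "prob_measures_on_borel PP"
    and d_metric: "metric_on PP d"
    and d_weak: "metrizes_weak_conv PP d"
    and P_in: "P \<in> PP" and Ps_in: "\<forall>n. Ps n \<in> PP"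
    and \<theta>_nonneg: "\<forall>n. 0 \<le> \<theta> n"
    and \<theta>_inf: "filterlim \<theta> at_top sequentially"
    and \<theta>_d: "(\<lambda>n. \<theta> n * d (Ps n) P) \<longlonglongrightarrow> 0"
    and meas_g: "g \<in> borel_measurable borel"
    and meas_gs: "\<forall>n. gs n \<in> borel_measurable borel"
    and cond_ii: "\<forall>x Qs Q. (\<forall>n. Qs n \<in> PP) \<and> Q \<in> PP \<and> (\<lambda>n. d (Qs n) Q) \<longlonglongrightarrow> 0 \<longrightarrow>
        Liminf at_top (\<lambda>K::real. liminf_joint
           (\<lambda>n y. expect (Qs n) (\<lambda>\<xi>. if gs n (y + \<xi>) \<le> - ereal K then gs n (y + \<xi>) else 0)) x) = 0"
    and cond_iii: "\<forall>x. g x \<le> liminf_joint gs x"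
    and cond_iv: "\<forall>x. \<forall>Q\<in>PP. expect Q (\<lambda>\<xi>. g (x + \<xi>)) > - \<infinity>"
    and cond_v: "\<forall>x. \<exists>h::'a \<Rightarrow> real. (\<forall>\<xi>. 0 \<le> h \<xi>) \<and> integrable P h \<and>
        (AE \<xi> in P. \<forall>n. gs n (x + \<xi>) \<le> ereal (h \<xi>)) \<and> (\<lambda>n. gs n x) \<longlonglongrightarrow> g x"
  shows "epi_converges (UNIV \<times> PP)
           (\<lambda>zs z. (\<lambda>n. fst (zs n)) \<longlonglongrightarrow> fst z \<and> (\<lambda>n. d (snd (zs n)) (snd z)) \<longlonglongrightarrow> 0)
           (\<lambda>n (x, Q). expect Q (\<lambda>\<xi>. gs n (x + \<xi>)) + ereal (\<theta> n * d Q (Ps n)))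
           (\<lambda>(x, Q). expect Q (\<lambda>\<xi>. g (x + \<xi>)) + iota {P} Q)"
proof -
  interpret penalized_expectations PP d g gs P Ps \<theta>
    by (rule penalized_expectations.intro) (fact assms)+
  show ?thesis
    unfolding epi_converges_def
  proof (intro ballI conjI allI impI)
    fix z :: "'a \<times> 'a measure" assume "z \<in> UNIV \<times> PP"
    then have "snd z \<in> PP" by auto
    show "(case z of (x, Q) \<Rightarrow> expect Q (\<lambda>\<xi>. g (x + \<xi>)) + iota {P} Q)
          \<le> liminf (\<lambda>n. case zs n of (x, Q) \<Rightarrow> expect Q (\<lambda>\<xi>. gs n (x + \<xi>)) + ereal (\<theta> n * d Q (Ps n)))"
      if "(\<forall>n. zs n \<in> UNIV \<times> PP) \<and>
          (\<lambda>n. fst (zs n)) \<longlonglongrightarrow> fst z \<and> (\<lambda>n. d (snd (zs n)) (snd z)) \<longlonglongrightarrow> 0"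
      for zs
    proof -
      have "\<forall>n. snd (zs n) \<in> PP" using that by (auto simp: mem_Times_iff)
      with that show ?thesis
        using penalized_liminf[OF \<open>snd z \<in> PP\<close>, of "\<lambda>n. snd (zs n)" "\<lambda>n. fst (zs n)" "fst z"]
        by (simp add: case_prod_beta)
    qed
    show "\<exists>zs. (\<forall>n. zs n \<in> UNIV \<times> PP) \<and>
          ((\<lambda>n. fst (zs n)) \<longlonglongrightarrow> fst z \<and> (\<lambda>n. d (snd (zs n)) (snd z)) \<longlonglongrightarrow> 0) \<and>
          (\<lambda>n. case zs n of (x, Q) \<Rightarrow> expect Q (\<lambda>\<xi>. gs n (x + \<xi>)) + ereal (\<theta> n * d Q (Ps n)))
          \<longlonglongrightarrow> (case z of (x, Q) \<Rightarrow> expect Q (\<lambda>\<xi>. g (x + \<xi>)) + iota {P} Q)"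
      using \<open>z \<in> UNIV \<times> PP\<close> penalized_recovery[OF \<open>snd z \<in> PP\<close>, of "fst z"]
        metric_onD(2)[OF d_metric \<open>snd z \<in> PP\<close> \<open>snd z \<in> PP\<close>]
      by (intro exI[of _ "\<lambda>_. z"]) (simp add: case_prod_beta)
  qed
qed

end
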